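(* Let $\hat W_k,\hat W_{k+1}\in B(\mathcal X;1)$ be fixed, $\eta$ a probability distribution on $A\setminus K$, $\tilde M\ge1$. Let $x\sim\eta$ and, conditionally on $x$, for each $a\in\mathcal A$ let $y_1^{a,1},\dots,y_1^{a,\tilde M}$ and $y_2^{a,1},\dots,y_2^{a,\tilde M}$ be mutually independent i.i.d. draws from $T(\cdot\mid x,a)$. For $\alpha=1,2$ define $\hat{\mathsf T}^a_\alpha\hat W_{k+1}(x)=\frac1{\tilde M}\sum_{j=1}^{\tilde M}[\mathbf 1_K(y_\alpha^{a,j})+\mathbf 1_{A\setminus K}(y_\alpha^{a,j})\hat W_{k+1}(y_\alpha^{a,j})]$. Then $$\|\hat W_k-\mathsf T\hat W_{k+1}\|_{1,\eta}\le\mathbf E\Big[\big|\hat W_k(x)-\max_{a\in\mathcal A}\hat{\mathsf T}^a_1\hat W_{k+1}(x)\big|\Big]+\mathbf E\Big[\max_{a\in\mathcal A}\big|\hat{\mathsf T}^a_1\hat W_{k+1}(x)-\hat{\mathsf T}^a_2\hat W_{k+1}(x)\big|\Big].$$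
   Context: Controlled Markov process on $\mathcal X\subset\mathbb R^n$, finite action set $\mathcal A$, kernel $T(\cdot\mid x,a)$; Borel safe set $A$ and target set $K$. $B(\mathcal X;1)$: measurable functions $\mathcal X\to[0,1]$. $(\mathsf TW)(x)=\max_{a}\mathbf E[\mathbf 1_K(y)+\mathbf 1_{A\setminus K}(y)W(y)]$, $y\sim T(\cdot\mid x,a)$. $\|f\|_{1,\eta}=\int_{A\setminus K}|f|\,d\eta$. *)

theory Defs
  imports "HOL-Probability.Probability"
begin

definition state_space :: "(real ^ 'n) set \<Rightarrow> (real ^ 'n) measure" where
  "state_space X = restrict_space borel X"

definition B1 :: "(real ^ 'n) set \<Rightarrow> ((real ^ 'n) \<Rightarrow> real) set" where
  "B1 X = {W. W \<in> borel_measurable (state_space X) \<and> (\<forall>x\<in>X. 0 \<le> W x \<and> W x \<le> 1)}"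

definition ra_payoff :: "(real ^ 'n) set \<Rightarrow> (real ^ 'n) set \<Rightarrow> ((real ^ 'n) \<Rightarrow> real) \<Rightarrow> (real ^ 'n) \<Rightarrow> real" where
  "ra_payoff A K W y = indicator K y + indicator (A - K) y * W y"

definition bellman :: "((real ^ 'n) \<Rightarrow> 'a::finite \<Rightarrow> (real ^ 'n) measure) \<Rightarrow> (real ^ 'n) set \<Rightarrow> (real ^ 'n) set
     \<Rightarrow> ((real ^ 'n) \<Rightarrow> real) \<Rightarrow> (real ^ 'n) \<Rightarrow> real" where
  "bellman T A K W x = (MAX a\<in>UNIV. \<integral>y. ra_payoff A K W y \<partial>(T x a))"

definition norm1 :: "(real ^ 'n) measure \<Rightarrow> (real ^ 'n) set \<Rightarrow> (real ^ 'n) set \<Rightarrow> ((real ^ 'n) \<Rightarrow> real) \<Rightarrow> real" where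
  "norm1 \<eta> A K f = (LINT x:(A - K)|\<eta>. \<bar>f x\<bar>)"

text \<open>Empirical operator: draws are indexed by (a, alpha, j), alpha in {1,2}, j in {1..M}.\<close>
definition emp_op :: "nat \<Rightarrow> (real ^ 'n) set \<Rightarrow> (real ^ 'n) set \<Rightarrow> ((real ^ 'n) \<Rightarrow> real)
     \<Rightarrow> ('a \<times> nat \<times> nat \<Rightarrow> real ^ 'n) \<Rightarrow> nat \<Rightarrow> 'a \<Rightarrow> real" where
  "emp_op M A K W ys \<alpha> a = (1 / real M) * (\<Sum>j=1..M. ra_payoff A K W (ys (a, \<alpha>, j)))"

definition sample_law :: "((real ^ 'n) \<Rightarrow> 'a::finite \<Rightarrow> (real ^ 'n) measure) \<Rightarrow> nat \<Rightarrow> (real ^ 'n)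
     \<Rightarrow> ('a \<times> nat \<times> nat \<Rightarrow> real ^ 'n) measure" where
  "sample_law T M x = PiM (UNIV \<times> {1, 2} \<times> {1..M}) (\<lambda>i. T x (fst i))"

end

theory Submission
  imports Defs
begin

(* Fix a state x and write u for the first batch of draws (alpha = 1)
   and v for the second batch (alpha = 2); the two batches are independent and the
   empirical operator of each batch is an unbiased estimate of the expectation
   E_{T(.|x,a)}[1_K + 1_{A\K} W], so (T W)(x) = max_a E_v[emp_2(v,a)].  Since
   a |-> max_a is 1-Lipschitz for the sup-distance, for every u
     |w - (T W)(x)| <= |w - max_a emp_1(u,a)| + E_v[max_a |emp_1(u,a) - emp_2(v,a)|],
   and integrating over u gives the pointwise bound.  Integrating once more against
   eta (and dropping the indicator of A\K) yields the theorem. *)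

section \<open>Probability kernels and finite products\<close>

lemma space_state_space [simp]: "space (state_space X) = X"
  by (simp add: state_space_def space_restrict_space)

lemma prob_kernel_fiber:
  assumes "\<kappa> \<in> N \<rightarrow>\<^sub>M prob_algebra S" "x \<in> space N"
  shows "sets (\<kappa> x) = sets S" "prob_space (\<kappa> x)"
  using measurable_space[OF assms] by (auto simp: space_prob_algebra)

lemma product_prob_spaceI:
  assumes "\<And>i. prob_space (N i)"
  shows "product_prob_space N"
  using assms by (auto simp: product_prob_space_def product_prob_space_axioms_def
      product_sigma_finite_def prob_space_imp_sigma_finite)

lemma prob_kernel_PiM:
  fixes \<kappa> :: "'i \<Rightarrow> 'x \<Rightarrow> 'y measure"
  assumes \<kappa>: "\<And>i. \<kappa> i \<in> N \<rightarrow>\<^sub>M prob_algebra S" and fin: "finite I"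
  shows "(\<lambda>x. PiM I (\<lambda>i. \<kappa> i x)) \<in> N \<rightarrow>\<^sub>M prob_algebra (PiM I (\<lambda>i. S))"
proof (rule measurable_prob_algebra_generated[where \<Omega>="PiE I (\<lambda>i. space S)"
      and G="prod_algebra I (\<lambda>i. S)"])
  show "sets (PiM I (\<lambda>i. S)) = sigma_sets (PiE I (\<lambda>i. space S)) (prod_algebra I (\<lambda>i. S))"
    by (rule sets_PiM)
  show "Int_stable (prod_algebra I (\<lambda>i. S))" by (rule Int_stable_prod_algebra)
  show "prod_algebra I (\<lambda>i. S) \<subseteq> Pow (PiE I (\<lambda>i. space S))"
    by (rule prod_algebra_sets_into_space)
next
  fix x assume x: "x \<in> space N"
  interpret PS: product_prob_space "\<lambda>i. \<kappa> i x" I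
    using prob_kernel_fiber(2)[OF \<kappa> x] by (rule product_prob_spaceI)
  show "prob_space (PiM I (\<lambda>i. \<kappa> i x))" by (rule PS.P.prob_space_axioms)
  show "sets (PiM I (\<lambda>i. \<kappa> i x)) = sets (PiM I (\<lambda>i. S))"
    by (rule sets_PiM_cong) (auto simp: prob_kernel_fiber(1)[OF \<kappa> x])
next
  fix E assume "E \<in> prod_algebra I (\<lambda>i. S)"
  then obtain F where E: "E = PiE I F" and F: "F \<in> (\<Pi> j\<in>I. sets S)"
    by (auto simp: prod_algebra_eq_finite[OF fin])
  have "(\<lambda>x. \<Prod>i\<in>I. emeasure (\<kappa> i x) (F i)) \<in> borel_measurable N"
    using F by (intro borel_measurable_prod_ennreal measurable_compose[OF
          measurable_prob_algebraD[OF \<kappa>] measurable_emeasure_subprob_algebra]) auto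
  then show "(\<lambda>x. emeasure (PiM I (\<lambda>i. \<kappa> i x)) E) \<in> borel_measurable N"
  proof (rule measurable_cong[THEN iffD1, rotated])
    fix x assume x: "x \<in> space N"
    interpret PS: product_prob_space "\<lambda>i. \<kappa> i x" I
      using prob_kernel_fiber(2)[OF \<kappa> x] by (rule product_prob_spaceI)
    show "(\<Prod>i\<in>I. emeasure (\<kappa> i x) (F i)) = emeasure (PiM I (\<lambda>i. \<kappa> i x)) E"
      unfolding E using F
      by (subst PS.emeasure_PiM[OF fin]) (auto simp: prob_kernel_fiber(1)[OF \<kappa> x])
  qed
qed

lemma kernel_integral_measurable:
  fixes G :: "'x \<Rightarrow> 'y \<Rightarrow> real"
  assumes \<kappa>: "\<kappa> \<in> N \<rightarrow>\<^sub>M subprob_algebra S"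
    and G: "(\<lambda>(x, y). G x y) \<in> borel_measurable (N \<Otimes>\<^sub>M S)"
  shows "(\<lambda>x. \<integral>y. G x y \<partial>\<kappa> x) \<in> borel_measurable N"
proof -
  have "(\<lambda>x. distr (\<kappa> x) (N \<Otimes>\<^sub>M S) (Pair x)) \<in> N \<rightarrow>\<^sub>M subprob_algebra (N \<Otimes>\<^sub>M S)"
    by (rule measurable_distr2[OF _ \<kappa>]) measurable
  then have "(\<lambda>x. \<integral>z. (\<lambda>(x, y). G x y) z \<partial>distr (\<kappa> x) (N \<Otimes>\<^sub>M S) (Pair x)) \<in> borel_measurable N"
    by (rule measurable_compose[OF _ integral_measurable_subprob_algebra[OF G]])
  then show ?thesis
  proof (rule measurable_cong[THEN iffD1, rotated])
    fix x assume x: "x \<in> space N"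
    have Pair_meas: "Pair x \<in> \<kappa> x \<rightarrow>\<^sub>M N \<Otimes>\<^sub>M S"
      unfolding measurable_cong_sets[OF subprob_measurableD(2)[OF \<kappa> x] refl]
      by (rule measurable_Pair1'[OF x])
    show "(\<integral>z. (\<lambda>(x, y). G x y) z \<partial>distr (\<kappa> x) (N \<Otimes>\<^sub>M S) (Pair x)) = (\<integral>y. G x y \<partial>\<kappa> x)"
      by (simp add: integral_distr[OF Pair_meas G])
  qed
qed

lemma integral_PiM_split:
  fixes F :: "_ \<Rightarrow> real"
  assumes N: "\<And>i. prob_space (N i)" and IJ: "I \<inter> J = {}" "finite I" "finite J"
    and F_meas: "F \<in> borel_measurable (PiM (I \<union> J) N)" and F_bound: "\<And>y. \<bar>F y\<bar> \<le> B"
  shows "(\<integral>y. F y \<partial>PiM (I \<union> J) N) = (\<integral>u. (\<integral>v. F (merge I J (u, v)) \<partial>PiM J N) \<partial>PiM I N)"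
proof -
  interpret PI: product_prob_space N I using N by (rule product_prob_spaceI)
  interpret PJ: product_prob_space N J using N by (rule product_prob_spaceI)
  interpret PIJ: pair_prob_space "PiM I N" "PiM J N"
    by (simp add: pair_prob_space_def PI.P.prob_space_axioms PJ.P.prob_space_axioms
        pair_sigma_finite_def prob_space_imp_sigma_finite)
  have "(\<integral>y. F y \<partial>PiM (I \<union> J) N)
      = (\<integral>y. F y \<partial>distr (PiM I N \<Otimes>\<^sub>M PiM J N) (PiM (I \<union> J) N) (merge I J))"
    using PI.distr_merge[OF IJ] by simp
  also have "\<dots> = (\<integral>z. F (merge I J z) \<partial>(PiM I N \<Otimes>\<^sub>M PiM J N))"
    by (rule integral_distr[OF measurable_merge F_meas])
  also have "\<dots> = (\<integral>u. (\<integral>v. F (merge I J (u, v)) \<partial>PiM J N) \<partial>PiM I N)"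
    using F_bound by (intro PIJ.integral_fst'[symmetric] PIJ.P.integrable_const_bound[where B=B]
        AE_I2 measurable_compose[OF measurable_merge F_meas]) auto
  finally show ?thesis .
qed

lemma integral_PiM_average:
  fixes f :: "'b \<Rightarrow> real" and c :: "nat \<Rightarrow> 'i"
  assumes N: "\<And>i. i \<in> I \<Longrightarrow> prob_space (N i)"
    and c: "\<And>j. j \<in> {1..M} \<Longrightarrow> c j \<in> I \<and> N (c j) = Q"
    and f_meas: "f \<in> borel_measurable Q" and f_bound: "\<And>y. \<bar>f y\<bar> \<le> B" and M: "M \<ge> 1"
  shows "(\<integral>\<omega>. (1 / real M) * (\<Sum>j=1..M. f (\<omega> (c j))) \<partial>PiM I N) = (\<integral>y. f y \<partial>Q)"
proof -
  interpret P: prob_space "PiM I N" using N by (rule prob_space_PiM)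
  have coordinate: "(\<integral>\<omega>. f (\<omega> (c j)) \<partial>PiM I N) = (\<integral>y. f y \<partial>Q)"
    and coordinate_int: "integrable (PiM I N) (\<lambda>\<omega>. f (\<omega> (c j)))"
    if j: "j \<in> {1..M}" for j
  proof -
    have ci: "c j \<in> I" and Nc: "N (c j) = Q" using c[OF j] by auto
    have fm: "f \<in> borel_measurable (N (c j))" using f_meas Nc by simp
    show "(\<integral>\<omega>. f (\<omega> (c j)) \<partial>PiM I N) = (\<integral>y. f y \<partial>Q)"
      using integral_distr[OF measurable_component_singleton[OF ci, where M=N] fm]
        distr_PiM_component[of I N "c j", OF N ci] Nc by simp
    show "integrable (PiM I N) (\<lambda>\<omega>. f (\<omega> (c j)))"
      using f_bound by (intro P.integrable_const_bound[where B=B] AE_I2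
          measurable_compose[OF measurable_component_singleton[OF ci, where M=N] fm]) auto
  qed
  have "(\<integral>\<omega>. (1 / real M) * (\<Sum>j=1..M. f (\<omega> (c j))) \<partial>PiM I N)
      = (1 / real M) * (\<Sum>j=1..M. \<integral>\<omega>. f (\<omega> (c j)) \<partial>PiM I N)"
    using coordinate_int by (simp add: Bochner_Integration.integral_sum)
  also have "\<dots> = (\<integral>y. f y \<partial>Q)" using coordinate M by simp
  finally show ?thesis .
qed

text \<open>The integral of a \<open>[0, 1]\<close>-valued function against a probability measure lies in
  \<open>[0, 1]\<close>; in the non-integrable case the integral is \<open>0\<close>.\<close>

lemma integral_unit_interval:
  fixes f :: "_ \<Rightarrow> real"
  assumes "prob_space R" "\<And>y. 0 \<le> f y \<and> f y \<le> 1"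
  shows "0 \<le> (\<integral>y. f y \<partial>R) \<and> (\<integral>y. f y \<partial>R) \<le> 1"
proof (cases "integrable R f")
  case True
  interpret prob_space R by fact
  have "(\<integral>y. f y \<partial>R) \<le> (\<integral>y. 1 \<partial>R)"
    using True assms(2) by (intro integral_mono) auto
  then show ?thesis using assms(2) by (auto intro: integral_nonneg simp: prob_space)
next
  case False
  then show ?thesis by (simp add: not_integrable_integral_eq)
qed

lemma Max_diff_le:
  fixes f g :: "'a::finite \<Rightarrow> real"
  shows "\<bar>(MAX a\<in>UNIV. f a) - (MAX a\<in>UNIV. g a)\<bar> \<le> (MAX a\<in>UNIV. \<bar>f a - g a\<bar>)"
proof -
  have "f a \<le> (MAX a\<in>UNIV. g a) + (MAX a\<in>UNIV. \<bar>f a - g a\<bar>)"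
    and "g a \<le> (MAX a\<in>UNIV. f a) + (MAX a\<in>UNIV. \<bar>f a - g a\<bar>)" for a
  proof -
    have "g a \<le> (MAX a\<in>UNIV. g a)" "f a \<le> (MAX a\<in>UNIV. f a)"
      "\<bar>f a - g a\<bar> \<le> (MAX a\<in>UNIV. \<bar>f a - g a\<bar>)" by auto
    then show "f a \<le> (MAX a\<in>UNIV. g a) + (MAX a\<in>UNIV. \<bar>f a - g a\<bar>)"
      and "g a \<le> (MAX a\<in>UNIV. f a) + (MAX a\<in>UNIV. \<bar>f a - g a\<bar>)" by linarith+
  qed
  then have "(MAX a\<in>UNIV. f a) \<le> (MAX a\<in>UNIV. g a) + (MAX a\<in>UNIV. \<bar>f a - g a\<bar>)"
    and "(MAX a\<in>UNIV. g a) \<le> (MAX a\<in>UNIV. f a) + (MAX a\<in>UNIV. \<bar>f a - g a\<bar>)"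
    by (auto intro: Max.boundedI)
  then show ?thesis by linarith
qed

text \<open>Absolute differences and maxima of \<open>[0, 1]\<close>-valued quantities stay in \<open>[0, 1]\<close>; these
  uniform bounds provide every integrability fact below.\<close>

lemma abs_diff_unit_interval:
  fixes s t :: real
  assumes "0 \<le> s \<and> s \<le> 1" "0 \<le> t \<and> t \<le> 1"
  shows "0 \<le> \<bar>s - t\<bar> \<and> \<bar>s - t\<bar> \<le> 1"
  using assms by (auto simp: abs_le_iff)

lemma Max_unit_interval:
  fixes f :: "'a::finite \<Rightarrow> real"
  assumes "\<And>a. 0 \<le> f a \<and> f a \<le> 1"
  shows "0 \<le> (MAX a\<in>UNIV. f a) \<and> (MAX a\<in>UNIV. f a) \<le> 1"
proof
  have "f undefined \<le> (MAX a\<in>UNIV. f a)" by simp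
  then show "0 \<le> (MAX a\<in>UNIV. f a)" using assms[of undefined] by linarith
  show "(MAX a\<in>UNIV. f a) \<le> 1" using assms by (intro Max.boundedI) auto
qed

section \<open>Symmetrization with two independent samples\<close>

lemma max_expectation_deviation:
  fixes s :: "'a::finite \<Rightarrow> real" and t :: "'a \<Rightarrow> 'v \<Rightarrow> real"
  assumes Q: "prob_space Q" and t_meas[measurable]: "\<And>a. t a \<in> borel_measurable Q"
    and s_unit: "\<And>a. 0 \<le> s a \<and> s a \<le> 1" and t_unit: "\<And>a v. 0 \<le> t a v \<and> t a v \<le> 1"
  shows "\<bar>(MAX a\<in>UNIV. s a) - (MAX a\<in>UNIV. \<integral>v. t a v \<partial>Q)\<bar>
      \<le> (\<integral>v. (MAX a\<in>UNIV. \<bar>s a - t a v\<bar>) \<partial>Q)"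
proof -
  interpret Q: prob_space Q by fact
  have dev_unit: "0 \<le> \<bar>s a - t a v\<bar> \<and> \<bar>s a - t a v\<bar> \<le> 1" for a v
    by (rule abs_diff_unit_interval[OF s_unit t_unit])
  have max_dev_unit: "0 \<le> (MAX a\<in>UNIV. \<bar>s a - t a v\<bar>) \<and> (MAX a\<in>UNIV. \<bar>s a - t a v\<bar>) \<le> 1" for v
    by (rule Max_unit_interval) (rule dev_unit)
  have "\<bar>s a - (\<integral>v. t a v \<partial>Q)\<bar> \<le> (\<integral>v. (MAX a\<in>UNIV. \<bar>s a - t a v\<bar>) \<partial>Q)" for a
  proof -
    have t_int: "integrable Q (t a)"
      using t_unit by (intro Q.integrable_const_bound[where B=1] AE_I2) auto
    have "\<bar>s a - (\<integral>v. t a v \<partial>Q)\<bar> = \<bar>\<integral>v. s a - t a v \<partial>Q\<bar>"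
      using t_int by (simp add: Q.prob_space)
    also have "\<dots> \<le> (\<integral>v. \<bar>s a - t a v\<bar> \<partial>Q)" by (rule integral_abs_bound)
    also have "\<dots> \<le> (\<integral>v. (MAX a\<in>UNIV. \<bar>s a - t a v\<bar>) \<partial>Q)"
      using dev_unit max_dev_unit
      by (intro integral_mono Q.integrable_const_bound[where B=1] AE_I2) auto
    finally show ?thesis .
  qed
  then have "(MAX a\<in>UNIV. \<bar>s a - (\<integral>v. t a v \<partial>Q)\<bar>) \<le> (\<integral>v. (MAX a\<in>UNIV. \<bar>s a - t a v\<bar>) \<partial>Q)"
    by (intro Max.boundedI) auto
  then show ?thesis using Max_diff_le[of s "\<lambda>a. \<integral>v. t a v \<partial>Q"] by linarith
qed

lemma symmetrization_bound:
  fixes t1 :: "'a::finite \<Rightarrow> 'u \<Rightarrow> real" and t2 :: "'a \<Rightarrow> 'v \<Rightarrow> real" and w :: real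
  assumes Q1: "prob_space Q1" and Q2: "prob_space Q2"
    and t1_meas[measurable]: "\<And>a. t1 a \<in> borel_measurable Q1"
    and t2_meas[measurable]: "\<And>a. t2 a \<in> borel_measurable Q2"
    and t1_unit: "\<And>a u. 0 \<le> t1 a u \<and> t1 a u \<le> 1"
    and t2_unit: "\<And>a v. 0 \<le> t2 a v \<and> t2 a v \<le> 1"
  shows "\<bar>w - (MAX a\<in>UNIV. \<integral>v. t2 a v \<partial>Q2)\<bar>
     \<le> (\<integral>u. \<bar>w - (MAX a\<in>UNIV. t1 a u)\<bar> \<partial>Q1)
      + (\<integral>u. (\<integral>v. (MAX a\<in>UNIV. \<bar>t1 a u - t2 a v\<bar>) \<partial>Q2) \<partial>Q1)"
proof -
  interpret Q1: prob_space Q1 by fact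
  interpret Q2: prob_space Q2 by fact
  interpret Q12: pair_prob_space Q1 Q2 by unfold_locales
  define h where "h u = (\<integral>v. (MAX a\<in>UNIV. \<bar>t1 a u - t2 a v\<bar>) \<partial>Q2)" for u
  have "(\<lambda>(u, v). MAX a\<in>UNIV. \<bar>t1 a u - t2 a v\<bar>) \<in> borel_measurable (Q1 \<Otimes>\<^sub>M Q2)"
    by measurable
  then have h_meas: "h \<in> borel_measurable Q1"
    unfolding h_def by (intro Q2.borel_measurable_lebesgue_integral) simp
  have dev_unit: "0 \<le> \<bar>t1 a u - t2 a v\<bar> \<and> \<bar>t1 a u - t2 a v\<bar> \<le> 1" for a u v
    by (rule abs_diff_unit_interval[OF t1_unit t2_unit])
  have h_unit: "0 \<le> h u \<and> h u \<le> 1" for u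
    unfolding h_def by (intro integral_unit_interval[OF Q2] Max_unit_interval dev_unit)
  have dist_bound: "\<bar>\<bar>w - (MAX a\<in>UNIV. t1 a u)\<bar>\<bar> \<le> \<bar>w\<bar> + 1" for u
  proof -
    have "0 \<le> (MAX a\<in>UNIV. t1 a u) \<and> (MAX a\<in>UNIV. t1 a u) \<le> 1"
      by (rule Max_unit_interval) (rule t1_unit)
    then show ?thesis by linarith
  qed
  have dist_int: "integrable Q1 (\<lambda>u. \<bar>w - (MAX a\<in>UNIV. t1 a u)\<bar>)"
    using dist_bound by (intro Q1.integrable_const_bound[where B="\<bar>w\<bar> + 1"] AE_I2) auto
  have h_int: "integrable Q1 h"
    using h_unit by (intro Q1.integrable_const_bound[where B=1] AE_I2 h_meas) auto
  have pointwise: "\<bar>w - (MAX a\<in>UNIV. \<integral>v. t2 a v \<partial>Q2)\<bar> \<le> \<bar>w - (MAX a\<in>UNIV. t1 a u)\<bar> + h u" for u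
  proof -
    have "\<bar>(MAX a\<in>UNIV. t1 a u) - (MAX a\<in>UNIV. \<integral>v. t2 a v \<partial>Q2)\<bar> \<le> h u"
      unfolding h_def by (rule max_expectation_deviation[OF Q2 t2_meas t1_unit t2_unit])
    then show ?thesis by linarith
  qed
  have "\<bar>w - (MAX a\<in>UNIV. \<integral>v. t2 a v \<partial>Q2)\<bar> = (\<integral>u. \<bar>w - (MAX a\<in>UNIV. \<integral>v. t2 a v \<partial>Q2)\<bar> \<partial>Q1)"
    by (simp add: Q1.prob_space)
  also have "\<dots> \<le> (\<integral>u. \<bar>w - (MAX a\<in>UNIV. t1 a u)\<bar> + h u \<partial>Q1)"
    using dist_int h_int pointwise by (intro integral_mono) auto
  also have "\<dots> = (\<integral>u. \<bar>w - (MAX a\<in>UNIV. t1 a u)\<bar> \<partial>Q1) + (\<integral>u. h u \<partial>Q1)"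
    using dist_int h_int by simp
  finally show ?thesis unfolding h_def .
qed

lemma sets_state_space_subset: "A \<in> sets (state_space X) \<Longrightarrow> A \<subseteq> X"
  using sets.sets_into_space[of A "state_space X"] by simp

lemma ra_payoff_unit_interval:
  assumes "A \<in> sets (state_space X)" "W \<in> B1 X"
  shows "0 \<le> ra_payoff A K W y \<and> ra_payoff A K W y \<le> 1"
  using assms sets_state_space_subset[OF assms(1)]
  by (auto simp: ra_payoff_def indicator_def B1_def)

lemma emp_op_unit_interval:
  assumes "A \<in> sets (state_space X)" "W \<in> B1 X" "M \<ge> 1"
  shows "0 \<le> emp_op M A K W ys \<alpha> a \<and> emp_op M A K W ys \<alpha> a \<le> 1"
proof -
  have payoff_unit: "0 \<le> ra_payoff A K W y \<and> ra_payoff A K W y \<le> 1" for y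
    by (rule ra_payoff_unit_interval[OF assms(1,2)])
  have "0 \<le> (\<Sum>j=1..M. ra_payoff A K W (ys (a, \<alpha>, j)))"
    by (intro sum_nonneg) (use payoff_unit in blast)
  moreover have "(\<Sum>j=1..M. ra_payoff A K W (ys (a, \<alpha>, j))) \<le> (\<Sum>j=1..M. 1)"
    by (intro sum_mono) (use payoff_unit in blast)
  ultimately show ?thesis using assms(3) unfolding emp_op_def by (auto simp: field_simps)
qed

lemma emp_error_unit_interval:
  assumes A_meas: "A \<in> sets (state_space X)" and W_B: "W \<in> B1 X" and M_pos: "M \<ge> 1"
    and w_unit: "0 \<le> w \<and> w \<le> 1"
  shows "0 \<le> \<bar>w - (MAX a\<in>UNIV. emp_op M A K W ys 1 (a::'a::finite))\<bar>
      \<and> \<bar>w - (MAX a\<in>UNIV. emp_op M A K W ys 1 a)\<bar> \<le> 1"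
  by (intro abs_diff_unit_interval w_unit Max_unit_interval emp_op_unit_interval[OF A_meas W_B M_pos])

lemma emp_discrepancy_unit_interval:
  assumes A_meas: "A \<in> sets (state_space X)" and W_B: "W \<in> B1 X" and M_pos: "M \<ge> 1"
  shows "0 \<le> (MAX a\<in>UNIV. \<bar>emp_op M A K W ys 1 (a::'a::finite) - emp_op M A K W ys 2 a\<bar>)
      \<and> (MAX a\<in>UNIV. \<bar>emp_op M A K W ys 1 a - emp_op M A K W ys 2 a\<bar>) \<le> 1"
  by (intro Max_unit_interval abs_diff_unit_interval emp_op_unit_interval[OF A_meas W_B M_pos])

lemma ra_payoff_measurable:
  assumes "sets R = sets (state_space X)" "A \<in> sets (state_space X)" "K \<in> sets (state_space X)"
    "W \<in> borel_measurable (state_space X)"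
  shows "ra_payoff A K W \<in> borel_measurable R"
proof -
  have "ra_payoff A K W \<in> borel_measurable (state_space X)"
    unfolding ra_payoff_def using assms(2-4) by measurable
  then show ?thesis using measurable_cong_sets[OF assms(1) refl] by blast
qed

lemma emp_op_measurable:
  assumes "\<And>i. i \<in> I \<Longrightarrow> sets (N i) = sets (state_space X)"
    "A \<in> sets (state_space X)" "K \<in> sets (state_space X)"
    "W \<in> borel_measurable (state_space X)" "\<And>j. j \<in> {1..M} \<Longrightarrow> (a, \<alpha>, j) \<in> I"
  shows "(\<lambda>ys. emp_op M A K W ys \<alpha> a) \<in> borel_measurable (PiM I N)"
  unfolding emp_op_def
proof (intro borel_measurable_times borel_measurable_const borel_measurable_sum)
  fix j assume j: "j \<in> {1..M}"
  show "(\<lambda>ys. ra_payoff A K W (ys (a, \<alpha>, j))) \<in> borel_measurable (PiM I N)"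
    by (rule measurable_compose[OF measurable_component_singleton[OF assms(5)[OF j], where M=N]
          ra_payoff_measurable[OF assms(1)[OF assms(5)[OF j]] assms(2-4)]])
qed

section \<open>The two batches of samples\<close>

definition batch :: "nat \<Rightarrow> nat \<Rightarrow> ('a \<times> nat \<times> nat) set" where
  "batch M \<alpha> = UNIV \<times> {\<alpha>} \<times> {1..M}"

lemma batch_disjoint: "batch M 1 \<inter> batch M 2 = {}"
  by (auto simp: batch_def)

lemma finite_batch: "finite (batch M \<alpha> :: ('a::finite \<times> nat \<times> nat) set)"
  by (simp add: batch_def)

lemma sample_law_batches:
  "sample_law T M x = PiM (batch M 1 \<union> batch M 2) (\<lambda>i. T x (fst i))"
  unfolding sample_law_def batch_def by (rule arg_cong2[where f=PiM]) auto

lemma emp_op_merge: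
  "emp_op M A K W (merge (batch M 1) (batch M 2) (u, v)) 1 = emp_op M A K W u 1"
  "emp_op M A K W (merge (batch M 1) (batch M 2) (u, v)) 2 = emp_op M A K W v 2"
  unfolding emp_op_def using batch_disjoint[of M]
  by (auto intro!: ext arg_cong[where f="\<lambda>s. 1 / real M * s"] sum.cong simp: batch_def merge_def)

lemma bellman_eq_batch_expectation:
  fixes T :: "real ^ 'n \<Rightarrow> 'a::finite \<Rightarrow> (real ^ 'n) measure"
  assumes A_meas: "A \<in> sets (state_space X)" and K_meas: "K \<in> sets (state_space X)"
    and T_kernel: "\<And>a. (\<lambda>x. T x a) \<in> state_space X \<rightarrow>\<^sub>M prob_algebra (state_space X)"
    and W_B: "W \<in> B1 X" and M_pos: "M \<ge> 1" and x: "x \<in> X"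
  shows "bellman T A K W x
    = (MAX a\<in>UNIV. \<integral>v. emp_op M A K W v \<alpha> a \<partial>PiM (batch M \<alpha>) (\<lambda>i. T x (fst i)))"
proof -
  have T_sets: "sets (T x a) = sets (state_space X)" and T_prob: "prob_space (T x a)" for a
    using prob_kernel_fiber[OF T_kernel, of x] x by auto
  have W_meas: "W \<in> borel_measurable (state_space X)" using W_B by (simp add: B1_def)
  have "(\<integral>v. emp_op M A K W v \<alpha> a \<partial>PiM (batch M \<alpha>) (\<lambda>i. T x (fst i)))
      = (\<integral>y. ra_payoff A K W y \<partial>T x a)" for a
    unfolding emp_op_def using ra_payoff_unit_interval[OF A_meas W_B]
    by (intro integral_PiM_average[where c="\<lambda>j. (a, \<alpha>, j)" and B=1] T_prob M_pos
        ra_payoff_measurable[OF T_sets A_meas K_meas W_meas]) (auto simp: batch_def)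
  then show ?thesis by (simp add: bellman_def)
qed

lemma integral_sample_law_split:
  fixes T :: "real ^ 'n \<Rightarrow> 'a::finite \<Rightarrow> (real ^ 'n) measure" and F :: "_ \<Rightarrow> real"
  assumes T_prob: "\<And>a. prob_space (T x a)"
    and F_meas: "F \<in> borel_measurable (PiM (batch M 1 \<union> batch M 2) (\<lambda>i. T x (fst i)))"
    and F_bound: "\<And>ys. \<bar>F ys\<bar> \<le> B"
  shows "(\<integral>ys. F ys \<partial>sample_law T M x)
    = (\<integral>u. (\<integral>v. F (merge (batch M 1) (batch M 2) (u, v)) \<partial>PiM (batch M 2) (\<lambda>i. T x (fst i)))
         \<partial>PiM (batch M 1) (\<lambda>i. T x (fst i)))"
  unfolding sample_law_batches
  by (rule integral_PiM_split[OF T_prob batch_disjoint finite_batch finite_batch F_meas F_bound])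

section \<open>The error bound at a fixed state\<close>

text \<open>At every state \<open>x\<close>, the distance of any value \<open>w\<close> to the Bellman backup is controlled by
  the empirical error of the first batch and the discrepancy between the two batches: this
  is the symmetrization inequality with \<open>Q\<^sub>1, Q\<^sub>2\<close> the laws of the two batches.\<close>

lemma pointwise_sampling_bound:
  fixes T :: "real ^ 'n \<Rightarrow> 'a::finite \<Rightarrow> (real ^ 'n) measure" and w :: real
  assumes A_meas: "A \<in> sets (state_space X)" and K_meas: "K \<in> sets (state_space X)"
    and T_kernel: "\<And>a. (\<lambda>x. T x a) \<in> state_space X \<rightarrow>\<^sub>M prob_algebra (state_space X)"
    and W_B: "W \<in> B1 X" and M_pos: "M \<ge> 1" and x: "x \<in> X"
  shows "\<bar>w - bellman T A K W x\<bar>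
     \<le> (\<integral>ys. \<bar>w - (MAX a\<in>UNIV. emp_op M A K W ys 1 a)\<bar> \<partial>(sample_law T M x))
      + (\<integral>ys. (MAX a\<in>UNIV. \<bar>emp_op M A K W ys 1 a - emp_op M A K W ys 2 a\<bar>) \<partial>(sample_law T M x))"
proof -
  have T_sets: "sets (T x a) = sets (state_space X)" and T_prob: "prob_space (T x a)" for a
    using prob_kernel_fiber[OF T_kernel, of x] x by auto
  have W_meas: "W \<in> borel_measurable (state_space X)" using W_B by (simp add: B1_def)
  have emp_unit: "0 \<le> emp_op M A K W ys \<alpha> a \<and> emp_op M A K W ys \<alpha> a \<le> 1" for ys \<alpha> a
    by (rule emp_op_unit_interval[OF A_meas W_B M_pos])
  have emp_meas: "(\<lambda>ys. emp_op M A K W ys \<alpha> a) \<in> borel_measurable (PiM J (\<lambda>i. T x (fst i)))"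
    if "batch M \<alpha> \<subseteq> J" for J \<alpha> a
    using that by (intro emp_op_measurable[OF _ A_meas K_meas W_meas]) (auto simp: T_sets batch_def)
  have "\<bar>w - bellman T A K W x\<bar>
      \<le> (\<integral>u. \<bar>w - (MAX a\<in>UNIV. emp_op M A K W u 1 a)\<bar> \<partial>PiM (batch M 1) (\<lambda>i. T x (fst i)))
       + (\<integral>u. (\<integral>v. (MAX a\<in>UNIV. \<bar>emp_op M A K W u 1 a - emp_op M A K W v 2 a\<bar>)
            \<partial>PiM (batch M 2) (\<lambda>i. T x (fst i))) \<partial>PiM (batch M 1) (\<lambda>i. T x (fst i)))"
    unfolding bellman_eq_batch_expectation[OF A_meas K_meas T_kernel W_B M_pos x, where \<alpha>=2]
    by (intro symmetrization_bound prob_space_PiM T_prob emp_meas emp_unit) simp_all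
  also have "\<dots> = (\<integral>ys. \<bar>w - (MAX a\<in>UNIV. emp_op M A K W ys 1 a)\<bar> \<partial>(sample_law T M x))
      + (\<integral>ys. (MAX a\<in>UNIV. \<bar>emp_op M A K W ys 1 a - emp_op M A K W ys 2 a\<bar>) \<partial>(sample_law T M x))"
  proof -
    have error_bound: "\<bar>\<bar>w - (MAX a\<in>UNIV. emp_op M A K W ys 1 a)\<bar>\<bar> \<le> \<bar>w\<bar> + 1"
      for ys :: "'a \<times> nat \<times> nat \<Rightarrow> real ^ 'n"
    proof -
      have "0 \<le> (MAX a\<in>UNIV. emp_op M A K W ys 1 a) \<and> (MAX a\<in>UNIV. emp_op M A K W ys 1 a) \<le> 1"
        by (rule Max_unit_interval) (rule emp_unit)
      then show ?thesis by linarith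
    qed
    have discrepancy_bound: "\<bar>MAX a\<in>UNIV. \<bar>emp_op M A K W ys 1 a - emp_op M A K W ys 2 a\<bar>\<bar> \<le> 1"
      for ys :: "'a \<times> nat \<times> nat \<Rightarrow> real ^ 'n"
      using emp_discrepancy_unit_interval[OF A_meas W_B M_pos, where ys=ys and K=K] by linarith
    have [measurable]:
      "(\<lambda>ys. emp_op M A K W ys 1 a) \<in> borel_measurable (PiM (batch M 1 \<union> batch M 2) (\<lambda>i. T x (fst i)))"
      "(\<lambda>ys. emp_op M A K W ys 2 a) \<in> borel_measurable (PiM (batch M 1 \<union> batch M 2) (\<lambda>i. T x (fst i)))"
      for a by (intro emp_meas; blast)+
    have error_meas: "(\<lambda>ys. \<bar>w - (MAX a\<in>UNIV. emp_op M A K W ys 1 a)\<bar>)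
        \<in> borel_measurable (PiM (batch M 1 \<union> batch M 2) (\<lambda>i. T x (fst i)))"
      and discrepancy_meas: "(\<lambda>ys. MAX a\<in>UNIV. \<bar>emp_op M A K W ys 1 a - emp_op M A K W ys 2 a\<bar>)
        \<in> borel_measurable (PiM (batch M 1 \<union> batch M 2) (\<lambda>i. T x (fst i)))"
      by measurable
    show ?thesis
      unfolding integral_sample_law_split[where T=T and x=x, OF T_prob error_meas error_bound]
        integral_sample_law_split[where T=T and x=x, OF T_prob discrepancy_meas discrepancy_bound] emp_op_merge
      by (simp add: prob_space.prob_space[OF prob_space_PiM[OF T_prob]])
  qed
  finally show ?thesis .
qed

lemma sample_law_prob_kernel:
  fixes T :: "real ^ 'n \<Rightarrow> 'a::finite \<Rightarrow> (real ^ 'n) measure"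
  assumes T_kernel: "\<And>a. (\<lambda>x. T x a) \<in> state_space X \<rightarrow>\<^sub>M prob_algebra (state_space X)"
  shows "sample_law T M
    \<in> state_space X \<rightarrow>\<^sub>M prob_algebra (PiM (UNIV \<times> {1, 2} \<times> {1..M}) (\<lambda>i. state_space X))"
  unfolding sample_law_def by (rule prob_kernel_PiM[where \<kappa>="\<lambda>i x. T x (fst i)", OF T_kernel]) simp

lemma integrable_sample_average:
  fixes T :: "real ^ 'n \<Rightarrow> 'a::finite \<Rightarrow> (real ^ 'n) measure"
    and G :: "real ^ 'n \<Rightarrow> ('a \<times> nat \<times> nat \<Rightarrow> real ^ 'n) \<Rightarrow> real"
  assumes T_kernel: "\<And>a. (\<lambda>x. T x a) \<in> state_space X \<rightarrow>\<^sub>M prob_algebra (state_space X)"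
    and eta_prob: "prob_space \<eta>" and eta_sets: "sets \<eta> = sets (state_space X)"
    and G_meas: "(\<lambda>(x, ys). G x ys)
      \<in> borel_measurable (state_space X \<Otimes>\<^sub>M PiM (UNIV \<times> {1, 2} \<times> {1..M}) (\<lambda>i. state_space X))"
    and G_unit: "\<And>x ys. x \<in> X \<Longrightarrow> 0 \<le> G x ys \<and> G x ys \<le> 1"
  shows "integrable \<eta> (\<lambda>x. \<integral>ys. G x ys \<partial>sample_law T M x)"
proof -
  interpret \<eta>: prob_space \<eta> by fact
  note kernel = sample_law_prob_kernel[OF T_kernel, where M=M]
  have meas: "(\<lambda>x. \<integral>ys. G x ys \<partial>sample_law T M x) \<in> borel_measurable \<eta>"
    unfolding measurable_cong_sets[OF eta_sets refl]
    by (rule kernel_integral_measurable[OF measurable_prob_algebraD[OF kernel] G_meas])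
  have "0 \<le> (\<integral>ys. G x ys \<partial>sample_law T M x) \<and> (\<integral>ys. G x ys \<partial>sample_law T M x) \<le> 1"
    if "x \<in> space \<eta>" for x
  proof -
    have x: "x \<in> X" using that sets_eq_imp_space_eq[OF eta_sets] by simp
    show ?thesis
      using prob_kernel_fiber(2)[OF kernel] x G_unit[OF x] by (intro integral_unit_interval) auto
  qed
  then show ?thesis by (intro \<eta>.integrable_const_bound[where B=1] AE_I2 meas) auto
qed

lemma sample_integrands_measurable:
  fixes Wk W :: "real ^ 'n \<Rightarrow> real"
  assumes A_meas: "A \<in> sets (state_space X)" and K_meas: "K \<in> sets (state_space X)"
    and Wk_meas[measurable]: "Wk \<in> borel_measurable (state_space X)"
    and W_meas: "W \<in> borel_measurable (state_space X)"
  shows "(\<lambda>(x, ys). \<bar>Wk x - (MAX a\<in>UNIV. emp_op M A K W ys 1 a)\<bar>)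
      \<in> borel_measurable (state_space X \<Otimes>\<^sub>M PiM ((UNIV :: 'a::finite set) \<times> {1, 2} \<times> {1..M}) (\<lambda>i. state_space X))"
    and "(\<lambda>(x, ys). MAX a\<in>UNIV. \<bar>emp_op M A K W ys 1 a - emp_op M A K W ys 2 a\<bar>)
      \<in> borel_measurable (state_space X \<Otimes>\<^sub>M PiM ((UNIV :: 'a set) \<times> {1, 2} \<times> {1..M}) (\<lambda>i. state_space X))"
proof -
  have [measurable]:
    "(\<lambda>z. emp_op M A K W (snd z) 1 a)
      \<in> borel_measurable (state_space X \<Otimes>\<^sub>M PiM ((UNIV :: 'a set) \<times> {1, 2} \<times> {1..M}) (\<lambda>i. state_space X))"
    "(\<lambda>z. emp_op M A K W (snd z) 2 a)
      \<in> borel_measurable (state_space X \<Otimes>\<^sub>M PiM ((UNIV :: 'a set) \<times> {1, 2} \<times> {1..M}) (\<lambda>i. state_space X))"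
    for a :: 'a
    by (intro measurable_compose[OF measurable_snd] emp_op_measurable[OF _ A_meas K_meas W_meas];
        simp)+
  show "(\<lambda>(x, ys). \<bar>Wk x - (MAX a\<in>UNIV. emp_op M A K W ys 1 a)\<bar>)
      \<in> borel_measurable (state_space X \<Otimes>\<^sub>M PiM ((UNIV :: 'a::finite set) \<times> {1, 2} \<times> {1..M}) (\<lambda>i. state_space X))"
    by measurable
  show "(\<lambda>(x, ys). MAX a\<in>UNIV. \<bar>emp_op M A K W ys 1 a - emp_op M A K W ys 2 a\<bar>)
      \<in> borel_measurable (state_space X \<Otimes>\<^sub>M PiM ((UNIV :: 'a set) \<times> {1, 2} \<times> {1..M}) (\<lambda>i. state_space X))"
    by measurable
qed

text \<open>Integrating a pointwise bound over \<open>\<eta>\<close>; the indicator of \<open>A - K\<close> in the weighted norm is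
  simply dropped.\<close>

lemma norm1_le_integral_sum:
  fixes f g1 g2 :: "real ^ 'n \<Rightarrow> real"
  assumes g1: "integrable \<eta> g1" and g2: "integrable \<eta> g2"
    and dom: "\<And>x. x \<in> space \<eta> \<Longrightarrow> \<bar>f x\<bar> \<le> g1 x + g2 x"
  shows "norm1 \<eta> A K f \<le> (\<integral>x. g1 x \<partial>\<eta>) + (\<integral>x. g2 x \<partial>\<eta>)"
proof -
  have restricted_dom: "indicator (A - K) x * \<bar>f x\<bar> \<le> g1 x + g2 x" if "x \<in> space \<eta>" for x
    using dom[OF that] abs_ge_zero[of "f x"] by (auto simp: indicator_def)
  have "norm1 \<eta> A K f = (\<integral>x. indicator (A - K) x * \<bar>f x\<bar> \<partial>\<eta>)"
    unfolding norm1_def set_lebesgue_integral_def by simp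
  also have "\<dots> \<le> (\<integral>x. g1 x + g2 x \<partial>\<eta>)"
  proof (cases "integrable \<eta> (\<lambda>x. indicator (A - K) x * \<bar>f x\<bar>)")
    case True
    then show ?thesis using g1 g2 restricted_dom by (intro integral_mono) auto
  next
    case False
    have "0 \<le> (\<integral>x. g1 x + g2 x \<partial>\<eta>)"
      using dom by (intro Bochner_Integration.integral_nonneg) (meson abs_ge_zero order_trans)
    with False show ?thesis by (simp add: not_integrable_integral_eq)
  qed
  also have "\<dots> = (\<integral>x. g1 x \<partial>\<eta>) + (\<integral>x. g2 x \<partial>\<eta>)" using g1 g2 by simp
  finally show ?thesis .
qed

theorem mainTheorem7:
  fixes X A K :: "(real ^ 'n) set"
    and T :: "real ^ 'n \<Rightarrow> 'a::finite \<Rightarrow> (real ^ 'n) measure"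
    and \<eta> :: "(real ^ 'n) measure"
    and Wk Wk1 :: "real ^ 'n \<Rightarrow> real"
    and M :: nat
  assumes X_borel: "X \<in> sets borel"
    and A_meas: "A \<in> sets (state_space X)"
    and K_meas: "K \<in> sets (state_space X)"
    and T_kernel: "\<And>a. (\<lambda>x. T x a) \<in> state_space X \<rightarrow>\<^sub>M prob_algebra (state_space X)"
    and Wk_B: "Wk \<in> B1 X"
    and Wk1_B: "Wk1 \<in> B1 X"
    and eta_prob: "prob_space \<eta>"
    and eta_sets: "sets \<eta> = sets (state_space X)"
    and eta_supp: "emeasure \<eta> (A - K) = 1"
    and M_pos: "M \<ge> 1"
  shows "norm1 \<eta> A K (\<lambda>x. Wk x - bellman T A K Wk1 x)
     \<le> (\<integral>x. (\<integral>ys. \<bar>Wk x - (MAX a\<in>UNIV. emp_op M A K Wk1 ys 1 a)\<bar> \<partial>(sample_law T M x)) \<partial>\<eta>)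
      + (\<integral>x. (\<integral>ys. (MAX a\<in>UNIV. \<bar>emp_op M A K Wk1 ys 1 a - emp_op M A K Wk1 ys 2 a\<bar>)
             \<partial>(sample_law T M x)) \<partial>\<eta>)"
proof (rule norm1_le_integral_sum)
  have Wk_meas: "Wk \<in> borel_measurable (state_space X)" and Wk_unit: "\<And>x. x \<in> X \<Longrightarrow> 0 \<le> Wk x \<and> Wk x \<le> 1"
    and Wk1_meas: "Wk1 \<in> borel_measurable (state_space X)"
    using Wk_B Wk1_B by (auto simp: B1_def)
  note integrands_meas = sample_integrands_measurable[OF A_meas K_meas Wk_meas Wk1_meas, of M]
  show "integrable \<eta> (\<lambda>x. \<integral>ys. \<bar>Wk x - (MAX a\<in>UNIV. emp_op M A K Wk1 ys 1 a)\<bar> \<partial>sample_law T M x)"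
    using integrands_meas(1) emp_error_unit_interval[OF A_meas Wk1_B M_pos Wk_unit]
    by (rule integrable_sample_average[OF T_kernel eta_prob eta_sets])
  show "integrable \<eta> (\<lambda>x. \<integral>ys. (MAX a\<in>UNIV. \<bar>emp_op M A K Wk1 ys 1 a - emp_op M A K Wk1 ys 2 a\<bar>)
      \<partial>sample_law T M x)"
    using integrands_meas(2) emp_discrepancy_unit_interval[OF A_meas Wk1_B M_pos]
    by (rule integrable_sample_average[OF T_kernel eta_prob eta_sets])
  fix x assume "x \<in> space \<eta>"
  then have "x \<in> X" using sets_eq_imp_space_eq[OF eta_sets] by simp
  then show "\<bar>Wk x - bellman T A K Wk1 x\<bar>
      \<le> (\<integral>ys. \<bar>Wk x - (MAX a\<in>UNIV. emp_op M A K Wk1 ys 1 a)\<bar> \<partial>sample_law T M x)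
       + (\<integral>ys. (MAX a\<in>UNIV. \<bar>emp_op M A K Wk1 ys 1 a - emp_op M A K Wk1 ys 2 a\<bar>) \<partial>sample_law T M x)"
    by (rule pointwise_sampling_bound[OF A_meas K_meas T_kernel Wk1_B M_pos])
qed

end
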